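(* Let $0<\beta\le\alpha$, let $\hat A=(\hat a[i_1],\dots,\hat a[i_m])$ be an $\alpha$-RS, and let $\theta>0$ satisfy $\hat a[i_1]\le\theta$. Let $i_v$ be the largest index in $\{i_1,\dots,i_m\}$ with $\hat a[i_v]\le\theta$. For an integer $\kappa$ let $H(\kappa)$ denote the largest index $i_u$ with $\hat a[i_u]\le(1+\beta)^{\kappa}$, when such an index exists. Then either $i_v=H(\lceil\log_{1+\beta}\theta\rceil)$ or $i_v=H(\lfloor\log_{1+\beta}\theta\rfloor)$ (the latter being defined in that case).
   Context: An $\alpha$-representative sequence ($\alpha$-RS), for $\alpha\ge 0$, is a finite sequence $\hat A=(\hat a[i_1],\hat a[i_2],\dots,\hat a[i_m])$ of real numbers with associated integer indices $0\le i_1<i_2<\dots<i_m$ such that $\hat a[i_1]\ge 0$ and $\hat a[i_{v+1}]\ge(1+\alpha)\hat a[i_v]$ for all $v\in[1,m-1]$. *)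

theory Defs
  imports Complex_Main
begin

text \<open>An alpha-representative sequence of length m is given by values a 0, ..., a (m-1)
  (the entries a-hat[i_1], ..., a-hat[i_m], 0-based) together with integer indices
  idx 0 < idx 1 < ... < idx (m-1), all natural numbers.\<close>
definition alpha_RS :: "real \<Rightarrow> (nat \<Rightarrow> real) \<Rightarrow> (nat \<Rightarrow> nat) \<Rightarrow> nat \<Rightarrow> bool" where
  "alpha_RS \<alpha> a idx m \<longleftrightarrow> \<alpha> \<ge> 0 \<and> m \<ge> 1 \<and> a 0 \<ge> 0 \<and>
     (\<forall>v. Suc v < m \<longrightarrow> idx v < idx (Suc v)) \<and>
     (\<forall>v. Suc v < m \<longrightarrow> a (Suc v) \<ge> (1 + \<alpha>) * a v)"

definition largest_le :: "(nat \<Rightarrow> real) \<Rightarrow> (nat \<Rightarrow> nat) \<Rightarrow> nat \<Rightarrow> real \<Rightarrow> nat option" where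
  "largest_le a idx m t =
     (if {idx u | u. u < m \<and> a u \<le> t} = {} then None
      else Some (Max {idx u | u. u < m \<and> a u \<le> t}))"

definition H_idx :: "real \<Rightarrow> (nat \<Rightarrow> real) \<Rightarrow> (nat \<Rightarrow> nat) \<Rightarrow> nat \<Rightarrow> int \<Rightarrow> nat option" where
  "H_idx \<beta> a idx m \<kappa> = largest_le a idx m ((1 + \<beta>) powr (real_of_int \<kappa>))"

end

theory Submission
  imports Defs
begin

text \<open>Put \<open>L = (1 + \<beta>) powr \<lfloor>log (1 + \<beta>) \<theta>\<rfloor>\<close> and \<open>U = (1 + \<beta>) powr \<lceil>log (1 + \<beta>) \<theta>\<rceil>\<close>,
  so that \<open>L \<le> \<theta> \<le> U \<le> (1 + \<beta>) * L\<close>. Since \<open>\<beta> \<le> \<alpha>\<close>, consecutive terms of an \<open>\<alpha>\<close>-RS differ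
  by at least the factor \<open>1 + \<beta>\<close>, so the window \<open>(L, U]\<close> contains at most one term. Hence one of
  \<open>(L, \<theta>]\<close> and \<open>(\<theta>, U]\<close> contains no term, and replacing the threshold \<open>\<theta>\<close> by the corresponding
  end of the window changes neither the set of terms below it nor its largest index.\<close>

definition geometric_growth :: "real \<Rightarrow> (nat \<Rightarrow> real) \<Rightarrow> nat \<Rightarrow> bool" where
  "geometric_growth b a m \<longleftrightarrow>
     (\<forall>v<m. 0 \<le> a v) \<and> (\<forall>v. Suc v < m \<longrightarrow> b * a v \<le> a (Suc v))"

lemma alpha_RS_geometric_growth:
  assumes "alpha_RS \<alpha> a idx m" and "0 \<le> \<beta>" and "\<beta> \<le> \<alpha>"
  shows "geometric_growth (1 + \<beta>) a m"
proof -
  have step: "(1 + \<alpha>) * a v \<le> a (Suc v)" if "Suc v < m" for v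
    using assms(1) that unfolding alpha_RS_def by blast
  have nonneg: "0 \<le> a v" if "v < m" for v
    using that
  proof (induction v)
    case 0
    then show ?case using assms(1) unfolding alpha_RS_def by simp
  next
    case (Suc v)
    then have "0 \<le> (1 + \<alpha>) * a v" using assms(2,3) by simp
    with step[OF Suc.prems] show ?case by linarith
  qed
  have "(1 + \<beta>) * a v \<le> a (Suc v)" if "Suc v < m" for v
  proof -
    have "(1 + \<beta>) * a v \<le> (1 + \<alpha>) * a v"
      using nonneg[of v] that assms(3) by (intro mult_right_mono) auto
    with step[OF that] show ?thesis by linarith
  qed
  with nonneg show ?thesis unfolding geometric_growth_def by blast
qed

lemma geometric_growth_mono:
  assumes "geometric_growth b a m" and "1 \<le> b" and "u \<le> w" and "w < m"
  shows "a u \<le> a w"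
  using assms(3,4)
proof (induction w rule: dec_induct)
  case base
  then show ?case by simp
next
  case (step n)
  have "0 \<le> a n" using assms(1) step.prems unfolding geometric_growth_def by simp
  then have "a n \<le> b * a n" using mult_right_mono[OF assms(2)] by simp
  also have "\<dots> \<le> a (Suc n)" using assms(1) step.prems unfolding geometric_growth_def by blast
  finally show ?case using step.IH step.prems by simp
qed

lemma geometric_growth_window_unique:
  assumes "geometric_growth b a m" and "1 \<le> b"
    and "u < m" "L < a u" "a u \<le> b * L"
    and "w < m" "L < a w" "a w \<le> b * L"
  shows "u = w"
proof -
  have not_before: "\<not> v < v'" if "v' < m" "L < a v" "a v' \<le> b * L" for v v'
  proof
    assume "v < v'"
    have "b * L < b * a v" using that(2) assms(2) by simp
    also have "\<dots> \<le> a (Suc v)"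
      using assms(1) \<open>v < v'\<close> that(1) unfolding geometric_growth_def by simp
    also have "\<dots> \<le> a v'" using geometric_growth_mono[OF assms(1,2)] \<open>v < v'\<close> that(1) by simp
    finally show False using that(3) by simp
  qed
  show ?thesis using not_before[of w u] not_before[of u w] assms(3-8) by simp
qed

lemma largest_le_cong:
  assumes "\<And>u. u < m \<Longrightarrow> a u \<le> s \<longleftrightarrow> a u \<le> t"
  shows "largest_le a idx m s = largest_le a idx m t"
proof -
  have "{idx u | u. u < m \<and> a u \<le> s} = {idx u | u. u < m \<and> a u \<le> t}"
    using assms by blast
  then show ?thesis unfolding largest_le_def by simp
qed

lemma largest_le_window:
  assumes "geometric_growth b a m" and "1 \<le> b"
    and "L \<le> \<theta>" and "\<theta> \<le> U" and "U \<le> b * L"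
  shows "largest_le a idx m \<theta> = largest_le a idx m U \<or> largest_le a idx m \<theta> = largest_le a idx m L"
proof (rule ccontr)
  assume "\<not> ?thesis"
  then have "\<not> (\<forall>u<m. a u \<le> \<theta> \<longleftrightarrow> a u \<le> U)" "\<not> (\<forall>u<m. a u \<le> \<theta> \<longleftrightarrow> a u \<le> L)"
    using largest_le_cong[of m a \<theta> U idx] largest_le_cong[of m a \<theta> L idx] by blast+
  then obtain u w where "u < m" "\<theta> < a u" "a u \<le> U" and "w < m" "L < a w" "a w \<le> \<theta>"
    using assms(3,4) by force
  with geometric_growth_window_unique[OF assms(1,2), of u L w] assms(3-5) show False by simp
qed

lemma powr_floor_ceiling_log_bounds:
  fixes b x :: real
  assumes "1 < b" and "0 < x"
  shows "b powr \<lfloor>log b x\<rfloor> \<le> x" and "x \<le> b powr \<lceil>log b x\<rceil>"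
    and "b powr \<lceil>log b x\<rceil> \<le> b * b powr \<lfloor>log b x\<rfloor>"
proof -
  have x: "x = b powr log b x" using assms by simp
  show "b powr \<lfloor>log b x\<rfloor> \<le> x" by (subst (2) x, rule powr_mono) (use assms in auto)
  show "x \<le> b powr \<lceil>log b x\<rceil>" by (subst (1) x, rule powr_mono) (use assms in auto)
  have "b powr \<lceil>log b x\<rceil> \<le> b powr (\<lfloor>log b x\<rfloor> + 1)"
    by (rule powr_mono) (use assms in \<open>auto simp: ceiling_altdef\<close>)
  also have "\<dots> = b * b powr \<lfloor>log b x\<rfloor>" using assms by (simp add: powr_add)
  finally show "b powr \<lceil>log b x\<rceil> \<le> b * b powr \<lfloor>log b x\<rfloor>" .
qed

theorem lemma3:
  fixes \<alpha> \<beta> \<theta> :: real and a :: "nat \<Rightarrow> real" and idx :: "nat \<Rightarrow> nat" and m :: nat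
  assumes "0 < \<beta>" and "\<beta> \<le> \<alpha>"
    and "alpha_RS \<alpha> a idx m"
    and "0 < \<theta>" and "a 0 \<le> \<theta>"
  shows "largest_le a idx m \<theta> = H_idx \<beta> a idx m \<lceil>log (1 + \<beta>) \<theta>\<rceil>
       \<or> largest_le a idx m \<theta> = H_idx \<beta> a idx m \<lfloor>log (1 + \<beta>) \<theta>\<rfloor>"
proof -
  have "geometric_growth (1 + \<beta>) a m"
    using alpha_RS_geometric_growth assms(1-3) by simp
  moreover have "1 < 1 + \<beta>" using assms(1) by simp
  ultimately show ?thesis
    unfolding H_idx_def
    using largest_le_window powr_floor_ceiling_log_bounds[OF _ assms(4)] by simp
qed

end
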